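(* Let $N=(P,T,F,M_0)$ be a Petri net with transition set $T=\{a,b,c\}$ (each transition being its own label, i.e. the labelling is injective). If the firing sequence $abbaac$ is enabled at $M_0$, then the firing sequence $aba$ is also enabled at $M_0$. Consequently, no injectively labelled Petri net has exactly the word $abbaac$ and its prefixes as its firing sequences (i.e. the word $abbaac$ is not synthesisable: $a$ cannot be prevented in the state reached after $ab$).
   Context: A Petri net is a tuple $N=(P,T,F,M_0)$ with finite disjoint sets $P$ (places) and $T$ (transitions), a flow function $F\colon (P\times T)\cup(T\times P)\to\mathbb{N}$, and an initial marking $M_0\colon P\to\mathbb{N}$. A transition $t$ is enabled at a marking $M$ if $M(p)\ge F(p,t)$ for all $p\in P$; firing it yields $M'$ with $M'(p)=M(p)-F(p,t)+F(t,p)$. A sequence $t_1t_2\cdots t_n$ is enabled (firable) at $M$ if $t_1$ is enabled at $M$, and successively each $t_{i+1}$ is enabled at the marking reached after firing $t_1\cdots t_i$. *)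

theory Defs
  imports Main
begin

(* The three transitions a, b, c (each transition is its own label). *)
datatype tr = a | b | c

(* A Petri net with place type 'p (finite) and transition set {a,b,c}.
   The flow function F is split into its two parts:
     Fpt p t = F(p,t)   and   Ftp t p = F(t,p). *)

definition enabled :: "('p \<Rightarrow> tr \<Rightarrow> nat) \<Rightarrow> ('p \<Rightarrow> nat) \<Rightarrow> tr \<Rightarrow> bool" where
  "enabled Fpt M t \<longleftrightarrow> (\<forall>p. Fpt p t \<le> M p)"

definition fire :: "('p \<Rightarrow> tr \<Rightarrow> nat) \<Rightarrow> (tr \<Rightarrow> 'p \<Rightarrow> nat) \<Rightarrow> ('p \<Rightarrow> nat) \<Rightarrow> tr \<Rightarrow> ('p \<Rightarrow> nat)" where
  "fire Fpt Ftp M t = (\<lambda>p. M p - Fpt p t + Ftp t p)"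

fun enabled_seq :: "('p \<Rightarrow> tr \<Rightarrow> nat) \<Rightarrow> (tr \<Rightarrow> 'p \<Rightarrow> nat) \<Rightarrow> ('p \<Rightarrow> nat) \<Rightarrow> tr list \<Rightarrow> bool" where
  "enabled_seq Fpt Ftp M [] = True"
| "enabled_seq Fpt Ftp M (t # ts) = (enabled Fpt M t \<and> enabled_seq Fpt Ftp (fire Fpt Ftp M t) ts)"

end

theory Submission
  imports Defs
begin

text \<open>
  Firing a word changes the marking of every place by the sum of the effects of its transitions,
  and the order does not matter.  Hence the marking reached after \<open>ab\<close> is the midpoint of
  the initial marking and the marking reached after \<open>abba\<close>.  Transition \<open>a\<close> is
  enabled at both endpoints (the run \<open>abbaac\<close> fires it there), and enabledness is
  preserved under midpoints since it is a conjunction of lower bounds.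
\<close>

definition fire_seq :: "('p \<Rightarrow> tr \<Rightarrow> nat) \<Rightarrow> (tr \<Rightarrow> 'p \<Rightarrow> nat) \<Rightarrow> ('p \<Rightarrow> nat) \<Rightarrow> tr list \<Rightarrow> ('p \<Rightarrow> nat)"
  where "fire_seq Fpt Ftp M w = fold (\<lambda>t M. fire Fpt Ftp M t) w M"

definition effect :: "('p \<Rightarrow> tr \<Rightarrow> nat) \<Rightarrow> (tr \<Rightarrow> 'p \<Rightarrow> nat) \<Rightarrow> tr list \<Rightarrow> 'p \<Rightarrow> int"
  where "effect Fpt Ftp w p = (\<Sum>t\<leftarrow>w. int (Ftp t p) - int (Fpt p t))"

lemma enabled_seq_append:
  "enabled_seq Fpt Ftp M (u @ v) \<longleftrightarrow>
     enabled_seq Fpt Ftp M u \<and> enabled_seq Fpt Ftp (fire_seq Fpt Ftp M u) v"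
  by (induction u arbitrary: M) (auto simp: fire_seq_def)

lemma fire_seq_eq_effect:
  assumes "enabled_seq Fpt Ftp M w"
  shows "int (fire_seq Fpt Ftp M w p) = int (M p) + effect Fpt Ftp w p"
  using assms
proof (induction w arbitrary: M)
  case Nil
  then show ?case by (simp add: fire_seq_def effect_def)
next
  case (Cons t w)
  then have "Fpt p t \<le> M p" and "enabled_seq Fpt Ftp (fire Fpt Ftp M t) w"
    by (auto simp: enabled_def)
  with Cons.IH show ?case
    by (simp add: fire_seq_def effect_def fire_def of_nat_diff)
qed

lemma enabled_midpoint:
  assumes "enabled Fpt M t" and "enabled Fpt M'' t"
    and "\<And>p. 2 * M' p = M p + M'' p"
  shows "enabled Fpt M' t"
  unfolding enabled_def
proof
  fix p
  have "2 * Fpt p t \<le> M p + M'' p"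
    using assms(1,2) by (simp add: enabled_def add_mono mult_2)
  with assms(3)[of p] show "Fpt p t \<le> M' p" by linarith
qed

lemma enabled_aba_if_enabled_abbaac:
  assumes "enabled_seq Fpt Ftp M0 [a, b, b, a, a, c]"
  shows "enabled_seq Fpt Ftp M0 [a, b, a]"
proof -
  let ?M = "fire_seq Fpt Ftp M0"
  have ab: "enabled_seq Fpt Ftp M0 [a, b]"
    and abba: "enabled_seq Fpt Ftp M0 [a, b, b, a]"
    and a_after_abba: "enabled Fpt (?M [a, b, b, a]) a"
    using assms enabled_seq_append[of Fpt Ftp M0 "[a, b]" "[b, a, a, c]"]
      enabled_seq_append[of Fpt Ftp M0 "[a, b, b, a]" "[a, c]"]
    by auto
  have "2 * ?M [a, b] p = M0 p + ?M [a, b, b, a] p" for p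
    using fire_seq_eq_effect[OF ab, of p] fire_seq_eq_effect[OF abba, of p]
    by (simp add: effect_def)
  moreover have "enabled Fpt M0 a"
    using assms by simp
  ultimately have "enabled Fpt (?M [a, b]) a"
    using a_after_abba by (blast intro: enabled_midpoint)
  then show ?thesis
    using ab enabled_seq_append[of Fpt Ftp M0 "[a, b]" "[a]"] by simp
qed

theorem mainTheorem2:
  fixes Fpt :: "'p::finite \<Rightarrow> tr \<Rightarrow> nat" and Ftp :: "tr \<Rightarrow> 'p \<Rightarrow> nat" and M0 :: "'p \<Rightarrow> nat"
  shows "(enabled_seq Fpt Ftp M0 [a, b, b, a, a, c] \<longrightarrow> enabled_seq Fpt Ftp M0 [a, b, a])
       \<and> {w. enabled_seq Fpt Ftp M0 w} \<noteq> {take k [a, b, b, a, a, c] | k. True}"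
proof (intro conjI impI notI)
  show "enabled_seq Fpt Ftp M0 [a, b, a]" if "enabled_seq Fpt Ftp M0 [a, b, b, a, a, c]"
    using that by (rule enabled_aba_if_enabled_abbaac)
next
  assume language: "{w. enabled_seq Fpt Ftp M0 w} = {take k [a, b, b, a, a, c] | k. True}"
  have "[a, b, b, a, a, c] = take 6 [a, b, b, a, a, c]"
    by simp
  then have "enabled_seq Fpt Ftp M0 [a, b, b, a, a, c]"
    using language by blast
  then have "[a, b, a] \<in> {take k [a, b, b, a, a, c] | k. True}"
    using language enabled_aba_if_enabled_abbaac by blast
  then obtain k where "[a, b, a] = take k [a, b, b, a, a, c]"
    by blast
  then show False
    by (cases k; cases "k - 1"; cases "k - 2"; cases "k - 3"; simp)
qed

end
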